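(* If $n$ is a positive integer, then $$\sum_{k = 1}^n \sum_{j = 0}^{k - 1} \frac{( - 1)^{n - j} ( n - j)!}{( n - j + 1)( k - j)}\left\{ {n \atop n - j} \right\} = - \frac{n}{2}B_{n - 1} .$$
   Context: $\left\{ {n \atop m} \right\}$ denotes the Stirling number of the second kind. $B_n$ are the Bernoulli numbers, defined by $\frac{t}{e^t-1}=\sum_{n\ge0}B_n\frac{t^n}{n!}$ (so $B_0=1$, $B_1=-1/2$). *)

theory Defs
  imports "HOL-Combinatorics.Stirling" "HOL-Computational_Algebra.Formal_Power_Series"
begin

text \<open>Bernoulli numbers via the exponential generating function
  t / (e^t - 1) = sum_n B_n t^n / n!, so B_0 = 1, B_1 = -1/2.
  Formal power series division: fps_X / (fps_exp 1 - 1).\<close>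
definition bernoulli :: "nat \<Rightarrow> real" where
  "bernoulli n = fact n * fps_nth (fps_X / (fps_exp 1 - 1)) n"

end

(* Write T c n = \<Sum>p\<le>n. (-1)^p p! S(n,p) c p.  Summing over k first turns the left-hand side
   into a n = T c n with c p = H p / (p + 1), H the harmonic numbers.  The recurrence of the
   Stirling numbers gives T c (n + 1) = T (\<lambda>p. p c p - (p + 1) c (p + 1)) n, which makes the
   transforms of 1/p and of H (p - 1) / p Kronecker deltas; together with
   \<Sum>k<n. C(n,k) S(k,p) = (p + 1) S(n,p+1) this yields \<Sum>k<n. C(n,k) a k = -[n = 2].
   For the exponential generating function A of a this says A(x) (e^x - 1) = -x^2/2, so
   A(x) = -(x/2) * x/(e^x - 1) and a n = -(n/2) B (n - 1). *)
theory Submission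
  imports Defs "HOL-Analysis.Harmonic_Numbers"
begin

definition stirling_transform :: "(nat \<Rightarrow> 'a::{comm_ring_1,ring_char_0}) \<Rightarrow> nat \<Rightarrow> 'a" where
  "stirling_transform c n = (\<Sum>p\<le>n. (-1) ^ p * fact p * of_nat (Stirling n p) * c p)"

lemma stirling_transform_Suc:
  "stirling_transform c (Suc n) =
     stirling_transform (\<lambda>p. of_nat p * c p - of_nat (Suc p) * c (Suc p)) n"
proof -
  define g where "g p = (-1) ^ p * fact p * of_nat (Stirling n p) * (of_nat p * c p)" for p
  define h where "h p = (-1) ^ p * fact p * of_nat (Stirling n p) * (of_nat (Suc p) * c (Suc p))" for p
  have "stirling_transform c (Suc n) =
      (\<Sum>p\<le>n. (-1) ^ Suc p * fact (Suc p) * of_nat (Stirling (Suc n) (Suc p)) * c (Suc p))"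
    unfolding stirling_transform_def by (subst sum.atMost_Suc_shift) simp
  also have "\<dots> = (\<Sum>p\<le>n. g (Suc p) - h p)"
    by (intro sum.cong) (simp_all add: g_def h_def algebra_simps)
  also have "\<dots> = (\<Sum>p\<le>n. g (Suc p)) - (\<Sum>p\<le>n. h p)"
    by (simp add: sum_subtractf)
  also have "(\<Sum>p\<le>n. g (Suc p)) = (\<Sum>p\<le>Suc n. g p)"
    by (subst sum.atMost_Suc_shift) (simp add: g_def)
  also have "\<dots> = (\<Sum>p\<le>n. g p)"
    by (simp add: g_def)
  finally show ?thesis
    by (simp add: stirling_transform_def g_def h_def sum_subtractf[symmetric] algebra_simps)
qed

lemma stirling_transform_cmult:
  "stirling_transform (\<lambda>p. a * c p) n = a * stirling_transform c n"
  unfolding stirling_transform_def by (simp add: sum_distrib_left algebra_simps)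

lemma stirling_transform_if_0:
  "stirling_transform (\<lambda>p. if p = 0 then a else 0) n = (if n = 0 then a else 0)"
proof -
  have "stirling_transform (\<lambda>p. if p = 0 then a else 0) n =
      (\<Sum>p\<le>n. if p = 0 then of_nat (Stirling n 0) * a else 0)"
    unfolding stirling_transform_def by (intro sum.cong) auto
  then show ?thesis
    by (cases n) simp_all
qed

text \<open>The value at \<open>n = 0\<close> relies on \<open>inverse 0 = 0\<close>.\<close>
lemma stirling_transform_inverse:
  "stirling_transform (\<lambda>p. inverse (of_nat p) :: 'a::field_char_0) n = (if n = 1 then -1 else 0)"
proof (cases n)
  case (Suc m)
  have "(\<lambda>p. of_nat p * inverse (of_nat p) - of_nat (Suc p) * inverse (of_nat (Suc p)) :: 'a) =
      (\<lambda>p. if p = 0 then -1 else 0)"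
    by (auto simp del: of_nat_Suc)
  then show ?thesis
    by (simp add: Suc stirling_transform_Suc stirling_transform_if_0)
qed (simp add: stirling_transform_def)

lemma stirling_transform_harm:
  "stirling_transform (\<lambda>p. harm (p - 1) / of_nat p :: 'a::real_normed_field) n =
     (if n = 2 then 1 else 0)"
proof (cases n)
  case (Suc m)
  have harm_step: "(\<lambda>p. of_nat p * (harm (p - 1) / of_nat p) -
        of_nat (Suc p) * (harm (Suc p - 1) / of_nat (Suc p))) = (\<lambda>p. - 1 * inverse (of_nat p) :: 'a)"
  proof
    fix p
    show "of_nat p * (harm (p - 1) / of_nat p) - of_nat (Suc p) * (harm (Suc p - 1) / of_nat (Suc p)) =
        (- 1 * inverse (of_nat p) :: 'a)"
      by (cases p) (simp_all add: harm_def harm_Suc del: of_nat_Suc)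
  qed
  have "stirling_transform (\<lambda>p. harm (p - 1) / of_nat p :: 'a) (Suc m) =
      - 1 * stirling_transform (\<lambda>p. inverse (of_nat p)) m"
    unfolding stirling_transform_Suc harm_step by (rule stirling_transform_cmult)
  then show ?thesis
    by (simp add: Suc stirling_transform_inverse)
qed (simp add: stirling_transform_def)

lemma sum_binomial_Stirling:
  "(\<Sum>k\<le>n. (n choose k) * Stirling k m) = Stirling (Suc n) (Suc m)"
proof (induction n arbitrary: m)
  case 0
  then show ?case by (cases m) auto
next
  case (Suc n)
  have shifted: "(\<Sum>k\<le>n. (n choose k) * Stirling (Suc k) m) =
      m * Stirling (Suc n) (Suc m) + Stirling (Suc n) m" for m
  proof (cases m)
    case (Suc m')
    have "(\<Sum>k\<le>n. (n choose k) * Stirling (Suc k) m) =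
        Suc m' * (\<Sum>k\<le>n. (n choose k) * Stirling k (Suc m')) + (\<Sum>k\<le>n. (n choose k) * Stirling k m')"
      by (simp add: Suc sum_distrib_left sum.distrib algebra_simps)
    then show ?thesis using Suc.IH Suc by simp
  qed simp
  have pascal: "(\<Sum>k\<le>Suc n. (Suc n choose k) * Stirling k m) =
      Stirling 0 m + (\<Sum>k\<le>n. (n choose k) * Stirling (Suc k) m) +
      (\<Sum>k\<le>n. (n choose Suc k) * Stirling (Suc k) m)"
    by (subst sum.atMost_Suc_shift) (simp add: sum.distrib algebra_simps)
  have "Stirling 0 m + (\<Sum>k\<le>n. (n choose Suc k) * Stirling (Suc k) m) =
      (\<Sum>k\<le>Suc n. (n choose k) * Stirling k m)"
    by (subst sum.atMost_Suc_shift) simp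
  also have "\<dots> = Stirling (Suc n) (Suc m)"
    using Suc.IH[of m] by simp
  finally show ?case
    using pascal shifted by simp
qed

lemma sum_less_binomial_Stirling:
  "(\<Sum>k<n. (n choose k) * Stirling k m) = Suc m * Stirling n (Suc m)"
  using sum_binomial_Stirling[of n m] by (simp add: lessThan_Suc_atMost[symmetric])

lemma sum_binomial_stirling_transform:
  "(\<Sum>k<n. of_nat (n choose k) * stirling_transform c k) =
     - stirling_transform (\<lambda>q. if q = 0 then 0 else c (q - 1)) n"
proof -
  define g where "g q = (-1) ^ q * fact q * of_nat (Stirling n q) * (if q = 0 then 0 else c (q - 1))" for q
  have "(\<Sum>k<n. of_nat (n choose k) * stirling_transform c k) =
      (\<Sum>k<n. \<Sum>p\<le>n. ((-1) ^ p * fact p * c p) * (of_nat (n choose k) * of_nat (Stirling k p)))"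
    unfolding stirling_transform_def
    by (intro sum.cong refl, subst sum.mono_neutral_left[of "{..n}"]) (auto simp: sum_distrib_left algebra_simps)
  also have "\<dots> = (\<Sum>p\<le>n. ((-1) ^ p * fact p * c p) * of_nat (Suc p * Stirling n (Suc p)))"
    by (subst sum.swap)
      (simp only: sum_distrib_left[symmetric] of_nat_mult[symmetric] of_nat_sum[symmetric]
        sum_less_binomial_Stirling)
  also have "\<dots> = - (\<Sum>p\<le>n. g (Suc p))"
    by (simp add: g_def sum_negf[symmetric] algebra_simps)
  also have "(\<Sum>p\<le>n. g (Suc p)) = (\<Sum>q\<le>Suc n. g q)"
    by (subst sum.atMost_Suc_shift) (simp add: g_def)
  also have "\<dots> = stirling_transform (\<lambda>q. if q = 0 then 0 else c (q - 1)) n"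
    by (simp add: g_def stirling_transform_def)
  finally show ?thesis .
qed

lemma egf_mult_exp_minus_one:
  fixes a :: "nat \<Rightarrow> 'a::field_char_0"
  shows "Abs_fps (\<lambda>n. a n / fact n) * (fps_exp 1 - 1) =
           Abs_fps (\<lambda>n. (\<Sum>k<n. of_nat (n choose k) * a k) / fact n)"
proof (rule fps_ext)
  fix n
  have exp_minus_one_nth: "fps_nth (fps_exp 1 - 1 :: 'a fps) j = (if j = 0 then 0 else 1 / fact j)"
    for j by simp
  have "fps_nth (Abs_fps (\<lambda>n. a n / fact n) * (fps_exp 1 - 1)) n =
      (\<Sum>k\<le>n. a k / fact k * (if n - k = 0 then 0 else 1 / fact (n - k)))"
    by (simp only: fps_mult_nth atLeast0AtMost exp_minus_one_nth fps_nth_Abs_fps)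
  also have "\<dots> = (\<Sum>k<n. a k / fact k * (1 / fact (n - k)))"
    by (simp add: lessThan_Suc_atMost[symmetric] mult.commute)
  also have "\<dots> = (\<Sum>k<n. of_nat (n choose k) * a k) / fact n"
    unfolding sum_divide_distrib by (rule sum.cong[OF refl]) (simp add: binomial_fact field_simps)
  finally show "fps_nth (Abs_fps (\<lambda>n. a n / fact n) * (fps_exp 1 - 1)) n =
      fps_nth (Abs_fps (\<lambda>n. (\<Sum>k<n. of_nat (n choose k) * a k) / fact n)) n"
    by simp
qed

lemma binomial_recurrence_imp_bernoulli:
  fixes a :: "nat \<Rightarrow> real"
  assumes "\<And>n. (\<Sum>k<n. real (n choose k) * a k) = (if n = 2 then -1 else 0)"
  shows "a (Suc m) = - (real (Suc m) / 2) * bernoulli m"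
proof -
  define E where "E = (fps_exp 1 - 1 :: real fps)"
  define F where "F = fps_X / E"
  have "E \<noteq> 0"
    using fps_exp_nth[of 1 1] by (auto simp: E_def simp del: fps_exp_nth)
  moreover have "subdegree E \<le> 1"
    by (rule subdegree_leI) (simp add: E_def)
  ultimately have "F * E = fps_X"
    unfolding F_def by (intro fps_times_divide_eq) simp_all
  have "Abs_fps (\<lambda>n. a n / fact n) * E = fps_const (-1/2) * fps_X ^ 2"
    unfolding E_def egf_mult_exp_minus_one assms
    by (rule fps_ext) (auto simp: numeral_2_eq_2)
  also have "\<dots> = (fps_const (-1/2) * fps_X * F) * E"
    using \<open>F * E = fps_X\<close> by (simp add: power2_eq_square mult.assoc)
  finally have egf_eq: "Abs_fps (\<lambda>n. a n / fact n) = fps_const (-1/2) * (fps_X * F)"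
    using \<open>E \<noteq> 0\<close> by (simp add: mult.assoc)
  have "a (Suc m) / fact (Suc m) = -1/2 * fps_nth F m"
    using arg_cong[OF egf_eq, of "\<lambda>f. fps_nth f (Suc m)"] by (simp del: fact_Suc)
  then have "a (Suc m) = -1/2 * fps_nth F m * fact (Suc m)"
    by (simp add: divide_eq_eq del: fact_Suc)
  moreover have "bernoulli m = fact m * fps_nth F m"
    by (simp add: bernoulli_def F_def E_def)
  ultimately show ?thesis
    by (simp add: field_simps)
qed

lemma sum_binomial_stirling_transform_harm:
  "(\<Sum>k<n. of_nat (n choose k) * stirling_transform (\<lambda>p. harm p / of_nat (Suc p)) k) =
     (if n = 2 then -1 else (0 :: 'a::real_normed_field))"
proof -
  have shifted: "(\<lambda>q. if q = 0 then 0 else harm (q - 1) / of_nat (Suc (q - 1))) =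
      (\<lambda>q. harm (q - 1) / (of_nat q :: 'a))"
    by (auto simp del: of_nat_Suc)
  show ?thesis
    unfolding sum_binomial_stirling_transform shifted stirling_transform_harm by simp
qed

lemma sum_triangle_eq_sum_harm:
  fixes h :: "nat \<Rightarrow> 'a::real_normed_field"
  shows "(\<Sum>k=1..n. \<Sum>j=0..k-1. h j / of_nat (k - j)) = (\<Sum>j<n. h j * harm (n - j))"
proof (induction n)
  case (Suc n)
  have "(\<Sum>j<Suc n. h j * harm (Suc n - j)) =
      (\<Sum>j<Suc n. h j * harm (n - j)) + (\<Sum>j<Suc n. h j / of_nat (Suc n - j))"
    by (simp add: sum.distrib[symmetric] Suc_diff_le harm_Suc divide_inverse distrib_left)
  also have "(\<Sum>j<Suc n. h j / of_nat (Suc n - j)) = (\<Sum>j=0..Suc n - 1. h j / of_nat (Suc n - j))"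
    by (simp add: atLeast0AtMost lessThan_Suc_atMost)
  finally show ?case
    using Suc.IH by (simp add: harm_expand(1))
qed simp

lemma sum_triangle_rev_eq_sum_harm:
  fixes f :: "nat \<Rightarrow> 'a::real_normed_field"
  shows "(\<Sum>k=1..n. \<Sum>j=0..k-1. f (n - j) / of_nat (k - j)) = (\<Sum>m\<le>n. f m * harm m)"
proof -
  define g where "g m = f m * harm m" for m
  have "(\<Sum>k=1..n. \<Sum>j=0..k-1. f (n - j) / of_nat (k - j)) = (\<Sum>j<n. g (n - j))"
    unfolding g_def by (rule sum_triangle_eq_sum_harm)
  also have "\<dots> = (\<Sum>j<Suc n. g (n - j))"
    by (simp add: g_def harm_expand(1))
  also have "\<dots> = (\<Sum>m<Suc n. g m)"
    using sum.nat_diff_reindex[of g "Suc n"] by simp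
  finally show ?thesis
    by (simp add: g_def lessThan_Suc_atMost)
qed

theorem proposition7:
  fixes n :: nat
  assumes "n \<ge> 1"
  shows "(\<Sum>k=1..n. \<Sum>j=0..k-1.
            (-1) ^ (n - j) * fact (n - j) / (real (n - j + 1) * real (k - j))
              * real (Stirling n (n - j)))
         = - (real n / 2) * bernoulli (n - 1)"
proof -
  define c where "c m = (-1) ^ m * fact m * real (Stirling n m) / real (Suc m)" for m
  have "(\<Sum>k=1..n. \<Sum>j=0..k-1.
            (-1) ^ (n - j) * fact (n - j) / (real (n - j + 1) * real (k - j))
              * real (Stirling n (n - j))) = (\<Sum>k=1..n. \<Sum>j=0..k-1. c (n - j) / real (k - j))"
    by (intro sum.cong refl) (simp add: c_def field_simps)
  also have "\<dots> = (\<Sum>m\<le>n. c m * harm m)"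
    by (rule sum_triangle_rev_eq_sum_harm)
  also have "\<dots> = stirling_transform (\<lambda>p. harm p / real (Suc p)) n"
    unfolding stirling_transform_def c_def by (intro sum.cong refl) (simp add: field_simps)
  also have "\<dots> = - (real n / 2) * bernoulli (n - 1)"
    using binomial_recurrence_imp_bernoulli[OF sum_binomial_stirling_transform_harm, of "n - 1"] assms
    by simp
  finally show ?thesis .
qed

end
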